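(* Let $m\ge 1$, $1\le B_1\le m$, $B_2\ge 1$, and for $i\in[m]=\{1,\dots,m\}$ let $g_i:\mathbb{R}^d\to\mathbb{R}^p$ be accessed through a stochastic oracle $g_i(\cdot;\xi)$ satisfying, for all $\mathbf{x},\mathbf{y}\in\mathbb{R}^d$ and each fresh oracle sample $\xi$ (a mini-batch of size $B_2$): $\mathbb{E}[g_i(\mathbf{x};\xi)]=g_i(\mathbf{x})$, $\mathbb{E}\|g_i(\mathbf{x};\xi)-g_i(\mathbf{x})\|^2\le \sigma^2/B_2$, and $\mathbb{E}\|g_i(\mathbf{x};\xi)-g_i(\mathbf{y};\xi)\|^2\le C_g^2\|\mathbf{x}-\mathbf{y}\|^2$; also each $g_i$ is $C_g$-Lipschitz. Let $(\mathbf{w}_t)_t$ be a sequence in $\mathbb{R}^d$ such that $\mathbf{w}_t$ and $\mathbf{w}_{t-1}$ are determined by the randomness before iteration $t$. At iteration $t$, a subset $\mathcal{B}_1^t\subseteq[m]$ of size $B_1$ is drawn uniformly at random, and for each $i\in\mathcal{B}_1^t$ a fresh oracle sample $\xi_t^i$ is drawn, independently of everything before. Let $\mathbf{u}_t=(\mathbf{u}_t^1,\dots,\mathbf{u}_t^m)$ be updated by $$\mathbf{u}_t^i=\begin{cases}(1-\beta_t)\mathbf{u}_{t-1}^i+\beta_t g_i(\mathbf{w}_t;\xi_t^i)+\gamma_t\big(g_i(\mathbf{w}_t;\xi_t^i)-g_i(\mathbf{w}_{t-1};\xi_t^i)\big), & i\in\mathcal{B}_1^t,\\ \mathbf{u}_{t-1}^i,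 & i\notin\mathcal{B}_1^t,\end{cases}$$ with $\gamma_t=\frac{m-B_1}{B_1(1-\beta_t)}+(1-\beta_t)$ and $\beta_t\le \frac12$. Then, writing $\|\mathbf{u}_t-g(\mathbf{w}_t)\|^2=\sum_{i=1}^m\|\mathbf{u}_t^i-g_i(\mathbf{w}_t)\|^2$, $$\mathbb{E}\|\mathbf{u}_t-g(\mathbf{w}_t)\|^2\le\Big(1-\frac{B_1\beta_t}{m}\Big)\mathbb{E}\|\mathbf{u}_{t-1}-g(\mathbf{w}_{t-1})\|^2+\frac{2B_1\beta_t^2\sigma^2}{B_2}+\frac{8m^2C_g^2}{B_1}\mathbb{E}\|\mathbf{w}_t-\mathbf{w}_{t-1}\|^2.$$
   Context: This is the Multi-block-Single-probe Variance Reduced (MSVR) estimator, used to track $g(\mathbf{w})=(g_1(\mathbf{w}),\dots,g_m(\mathbf{w}))$ while probing only $B_1$ blocks per iteration. $\mathbf{u}_t^i\in\mathbb{R}^p$. *)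

theory Defs
  imports "HOL-Probability.Probability"
begin

text \<open>MSVR estimator, one iteration. Blocks are indexed by 0..m-1 (i.e. {..<m}).\<close>

definition msvr_gamma :: "nat \<Rightarrow> nat \<Rightarrow> real \<Rightarrow> real" where
  "msvr_gamma m B1 \<beta> = (real m - real B1) / (real B1 * (1 - \<beta>)) + (1 - \<beta>)"

definition msvr_update ::
  "nat \<Rightarrow> nat \<Rightarrow> real \<Rightarrow> (nat \<Rightarrow> 'd \<Rightarrow> 'x \<Rightarrow> 'p::real_vector) \<Rightarrow> 'd \<Rightarrow> 'd
     \<Rightarrow> (nat \<Rightarrow> 'p) \<Rightarrow> nat set \<Rightarrow> (nat \<Rightarrow> 'x) \<Rightarrow> nat \<Rightarrow> 'p" where
  "msvr_update m B1 \<beta> G w_prev w_cur u_prev S \<xi> i =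
     (if i \<in> S then (1 - \<beta>) *\<^sub>R u_prev i + \<beta> *\<^sub>R G i w_cur (\<xi> i)
        + msvr_gamma m B1 \<beta> *\<^sub>R (G i w_cur (\<xi> i) - G i w_prev (\<xi> i))
      else u_prev i)"

definition uniform_subsets :: "nat \<Rightarrow> nat \<Rightarrow> nat set pmf" where
  "uniform_subsets m B1 = pmf_of_set {S. S \<subseteq> {..<m} \<and> card S = B1}"

definition track_err :: "nat \<Rightarrow> (nat \<Rightarrow> 'p::real_normed_vector) \<Rightarrow> (nat \<Rightarrow> 'd \<Rightarrow> 'p) \<Rightarrow> 'd \<Rightarrow> real" where
  "track_err m u g w = (\<Sum>i<m. (norm (u i - g i w))\<^sup>2)"

end

theory Submission
  imports Defs
begin

(* Conditioned on the past, the tracking error is a sum over blocks. A block outside the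
   sample keeps the error |b|^2 with b = u^i - g_i(w_t); a sampled block, which occurs with
   probability p = B1/m, has residual (1 - beta) b + W, where the oracle noise W has mean
   gamma D with D = g_i(w_t) - g_i(w_{t-1}) and second moment at most
   2 beta^2 sigma^2/B2 + 2 gamma^2 Cg^2 |w_t - w_{t-1}|^2. The target error
   |u^i - g_i(w_{t-1})|^2 expands to |b|^2 + 2 b.D + |D|^2, and gamma is chosen precisely so that
   the cross terms b.D on both sides carry the same weight:
   p (1 - beta) gamma = p (1 - beta)^2 + (1 - p). The remaining terms are controlled by
   beta <= 1/2, which gives gamma <= 2m/B1 - 1. *)

lemma card_subsets_containing:
  assumes "i < m" and "0 < k"
  shows "card {S. S \<subseteq> {..<m} \<and> card S = k \<and> i \<in> S} = (m - 1) choose (k - 1)"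
proof -
  have "{S. S \<subseteq> {..<m} \<and> card S = k \<and> i \<in> S}
      = insert i ` {T. T \<subseteq> {..<m} - {i} \<and> card T = k - 1}"
  proof (intro equalityI subsetI)
    fix S assume "S \<in> {S. S \<subseteq> {..<m} \<and> card S = k \<and> i \<in> S}"
    then show "S \<in> insert i ` {T. T \<subseteq> {..<m} - {i} \<and> card T = k - 1}"
      by (intro image_eqI[of _ _ "S - {i}"]) (auto simp: finite_subset)
  next
    fix S assume "S \<in> insert i ` {T. T \<subseteq> {..<m} - {i} \<and> card T = k - 1}"
    then show "S \<in> {S. S \<subseteq> {..<m} \<and> card S = k \<and> i \<in> S}"
      using assms by (auto simp: finite_subset card_insert_if)
  qed
  moreover have "inj_on (insert i) {T. T \<subseteq> {..<m} - {i} \<and> card T = k - 1}"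
    by (rule inj_onI) blast
  ultimately show ?thesis
    using assms(1) by (simp add: card_image n_subsets)
qed

lemma prob_uniform_subsets_mem:
  assumes "i < m" and "0 < k" and "k \<le> m"
  shows "measure_pmf.prob (uniform_subsets m k) {S. i \<in> S} = real k / real m"
proof -
  let ?A = "{S. S \<subseteq> {..<m} \<and> card S = k}"
  have "finite ?A"
    by (rule finite_subset[of _ "Pow {..<m}"]) auto
  moreover have card_A: "card ?A = m choose k"
    by (simp add: n_subsets)
  moreover have "0 < m choose k"
    using assms(3) by simp
  moreover from this card_A have "?A \<noteq> {}"
    by (metis card.empty less_irrefl)
  moreover have "?A \<inter> {S. i \<in> S} = {S. S \<subseteq> {..<m} \<and> card S = k \<and> i \<in> S}"
    by auto
  moreover have "real k * real (m choose k) = real m * real ((m - 1) choose (k - 1))"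
    using times_binomial_minus1_eq[OF assms(2)] by (metis of_nat_mult)
  ultimately show ?thesis
    using assms unfolding uniform_subsets_def
    by (simp add: measure_pmf_of_set card_subsets_containing field_simps)
qed

lemma nn_integral_measure_pmf_if:
  fixes a b :: real
  assumes "0 \<le> a" and "0 \<le> b"
  shows "(\<integral>\<^sup>+x. ennreal (if x \<in> A then a else b) \<partial>measure_pmf p)
       = ennreal (measure_pmf.prob p A * a + (1 - measure_pmf.prob p A) * b)"
proof -
  have "(\<lambda>x. ennreal (if x \<in> A then a else b)) = (\<lambda>x. ennreal a * indicator A x + ennreal b * indicator (- A) x)"
    by (auto simp: indicator_def)
  then show ?thesis
    using assms
    by (simp add: nn_integral_add nn_integral_cmult_indicator measure_pmf.emeasure_eq_measure
        measure_pmf.prob_compl[symmetric] ennreal_mult ennreal_plus[symmetric] mult.commute Compl_eq_Diff_UNIV)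
qed

lemma norm_add_sq_le:
  fixes a b :: "'a::real_normed_vector"
  shows "(norm (a + b))\<^sup>2 \<le> 2 * (norm a)\<^sup>2 + 2 * (norm b)\<^sup>2"
proof -
  have "(norm (a + b))\<^sup>2 \<le> (norm a + norm b)\<^sup>2"
    by (intro power_mono norm_triangle_ineq) simp
  also have "\<dots> \<le> 2 * (norm a)\<^sup>2 + 2 * (norm b)\<^sup>2"
    using zero_le_power2[of "norm a - norm b"] unfolding power2_diff power2_sum by linarith
  finally show ?thesis .
qed

lemma (in prob_space) expectation_norm_add_sq:
  fixes W :: "'a \<Rightarrow> 'b::{real_inner, banach, second_countable_topology}"
  assumes "integrable M W" and "integrable M (\<lambda>x. (norm (W x))\<^sup>2)"
  shows "integrable M (\<lambda>x. (norm (v + W x))\<^sup>2)"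
    and "expectation (\<lambda>x. (norm (v + W x))\<^sup>2)
         = (norm v)\<^sup>2 + 2 * (v \<bullet> expectation W) + expectation (\<lambda>x. (norm (W x))\<^sup>2)"
proof -
  have sq: "(norm (v + W x))\<^sup>2 = (norm v)\<^sup>2 + 2 * (v \<bullet> W x) + (norm (W x))\<^sup>2" for x
    by (simp add: power2_norm_eq_inner inner_add_left inner_add_right inner_commute)
  show "integrable M (\<lambda>x. (norm (v + W x))\<^sup>2)"
    unfolding sq using assms by auto
  show "expectation (\<lambda>x. (norm (v + W x))\<^sup>2)
         = (norm v)\<^sup>2 + 2 * (v \<bullet> expectation W) + expectation (\<lambda>x. (norm (W x))\<^sup>2)"
    unfolding sq using assms by (simp add: prob_space)
qed

lemma nn_integral_PiM_component:
  fixes f :: "'b \<Rightarrow> ennreal"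
  assumes "\<And>j. j \<in> I \<Longrightarrow> prob_space (M j)" and "i \<in> I" and "f \<in> borel_measurable (M i)"
  shows "(\<integral>\<^sup>+\<omega>. f (\<omega> i) \<partial>Pi\<^sub>M I M) = (\<integral>\<^sup>+x. f x \<partial>M i)"
proof -
  have "(\<integral>\<^sup>+\<omega>. f (\<omega> i) \<partial>Pi\<^sub>M I M) = (\<integral>\<^sup>+x. f x \<partial>distr (Pi\<^sub>M I M) (M i) (\<lambda>\<omega>. \<omega> i))"
    using assms by (intro nn_integral_distr[symmetric]) auto
  then show ?thesis
    using assms by (simp add: distr_PiM_component)
qed

lemma integral_pair_measure_le:
  fixes F :: "'a \<times> 'b \<Rightarrow> real"
  assumes "sigma_finite_measure N" and "F \<in> borel_measurable (M \<Otimes>\<^sub>M N)" and "\<And>\<omega>. 0 \<le> F \<omega>"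
    and "integrable M h" and "\<And>x. 0 \<le> h x"
    and "\<And>x. x \<in> space M \<Longrightarrow> (\<integral>\<^sup>+y. F (x, y) \<partial>N) \<le> ennreal (h x)"
  shows "(\<integral>\<omega>. F \<omega> \<partial>(M \<Otimes>\<^sub>M N)) \<le> (\<integral>x. h x \<partial>M)"
proof -
  have "(\<integral>\<^sup>+\<omega>. F \<omega> \<partial>(M \<Otimes>\<^sub>M N)) = (\<integral>\<^sup>+x. (\<integral>\<^sup>+y. F (x, y) \<partial>N) \<partial>M)"
    using assms(2) by (intro sigma_finite_measure.nn_integral_fst[OF assms(1), symmetric]) measurable
  also have "\<dots> \<le> (\<integral>\<^sup>+x. h x \<partial>M)"
    using assms(6) by (intro nn_integral_mono)
  also have "\<dots> = ennreal (\<integral>x. h x \<partial>M)"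
    using assms(4,5) by (intro nn_integral_eq_integral) auto
  finally have "(\<integral>\<^sup>+\<omega>. F \<omega> \<partial>(M \<Otimes>\<^sub>M N)) \<le> ennreal (\<integral>x. h x \<partial>M)" .
  then show ?thesis
    using assms(2,3,5) by (simp add: integral_eq_nn_integral enn2real_leI)
qed

lemma msvr_gamma_balance:
  assumes "\<beta> \<noteq> 1" and "0 < B1" and "0 < m"
  shows "real B1 / real m * (1 - \<beta>) * msvr_gamma m B1 \<beta>
         = real B1 / real m * (1 - \<beta>)\<^sup>2 + (1 - real B1 / real m)"
  using assms by (simp add: msvr_gamma_def field_simps power2_eq_square)

lemma msvr_gamma_sq_le:
  assumes "0 < \<beta>" and "\<beta> \<le> 1 / 2" and "1 \<le> B1" and "B1 \<le> m"
  shows "2 * (real B1 / real m) * (msvr_gamma m B1 \<beta>)\<^sup>2 \<le> 8 * (real m / real B1)"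
proof -
  let ?q = "real m / real B1"
  have "(real m - real B1) / real B1 * (1 / (1 - \<beta>)) \<le> (real m - real B1) / real B1 * 2"
    using assms by (intro mult_left_mono) (auto simp: field_simps)
  then have "(real m - real B1) / (real B1 * (1 - \<beta>)) \<le> 2 * (?q - 1)"
    using assms by (simp add: field_simps)
  then have "msvr_gamma m B1 \<beta> \<le> 2 * ?q - 1"
    using assms by (simp add: msvr_gamma_def)
  moreover have "0 \<le> msvr_gamma m B1 \<beta>"
    using assms by (simp add: msvr_gamma_def)
  ultimately have "(msvr_gamma m B1 \<beta>)\<^sup>2 \<le> (2 * ?q - 1)\<^sup>2"
    by (intro power_mono)
  then have "2 * (real B1 / real m) * (msvr_gamma m B1 \<beta>)\<^sup>2 \<le> 2 * (real B1 / real m) * (2 * ?q - 1)\<^sup>2"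
    by (intro mult_left_mono) auto
  also have "\<dots> \<le> 8 * ?q"
    using assms by (simp add: field_simps power2_eq_square)
  finally show ?thesis .
qed

lemma msvr_error_recursion_scalar:
  fixes p \<beta> \<gamma> K e c d L :: real
  assumes "0 \<le> p" "p \<le> 1" "0 \<le> \<beta>" "\<beta> \<le> 1"
    and balance: "p * (1 - \<beta>) * \<gamma> = p * (1 - \<beta>)\<^sup>2 + (1 - p)"
    and "2 * p * \<gamma>\<^sup>2 \<le> K" and "0 \<le> d" and "d \<le> L" and "0 \<le> e + 2 * c + d"
  shows "p * ((1 - \<beta>)\<^sup>2 * e + 2 * \<gamma> * (1 - \<beta>) * c + 2 * \<gamma>\<^sup>2 * L) + (1 - p) * e
         \<le> (1 - p * \<beta>) * (e + 2 * c + d) + K * L"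
proof -
  define \<kappa> where "\<kappa> = p * (1 - \<beta>)\<^sup>2 + (1 - p)"
  have "p * ((1 - \<beta>)\<^sup>2 * e + 2 * \<gamma> * (1 - \<beta>) * c + 2 * \<gamma>\<^sup>2 * L) + (1 - p) * e
        = \<kappa> * e + 2 * (p * (1 - \<beta>) * \<gamma>) * c + (2 * p * \<gamma>\<^sup>2) * L"
    unfolding \<kappa>_def by (simp add: algebra_simps)
  also have "\<dots> = \<kappa> * (e + 2 * c + d) - \<kappa> * d + (2 * p * \<gamma>\<^sup>2) * L"
    unfolding balance \<kappa>_def[symmetric] by (simp add: algebra_simps)
  also have "\<dots> \<le> (1 - p * \<beta>) * (e + 2 * c + d) + K * L"
  proof -
    have "(1 - \<beta>)\<^sup>2 \<le> 1 - \<beta>"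
      using assms by (simp add: power2_eq_square mult_left_le_one_le)
    then have "\<kappa> \<le> 1 - p * \<beta>"
      unfolding \<kappa>_def using mult_left_mono[OF _ \<open>0 \<le> p\<close>] by (fastforce simp: algebra_simps)
    then have "\<kappa> * (e + 2 * c + d) \<le> (1 - p * \<beta>) * (e + 2 * c + d)"
      using assms by (intro mult_right_mono)
    moreover have "0 \<le> \<kappa> * d"
      unfolding \<kappa>_def using assms by simp
    moreover have "(2 * p * \<gamma>\<^sup>2) * L \<le> K * L"
      using assms by (intro mult_right_mono) auto
    ultimately show ?thesis by linarith
  qed
  finally show ?thesis .
qed

lemma track_err_nonneg: "0 \<le> track_err m u g w"
  by (simp add: track_err_def sum_nonneg)

locale msvr_setting =
  fixes D :: "'x measure"
    and G :: "nat \<Rightarrow> 'd::euclidean_space \<Rightarrow> 'x \<Rightarrow> 'p::euclidean_space"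
    and g :: "nat \<Rightarrow> 'd \<Rightarrow> 'p"
    and m B1 B2 :: nat and \<sigma> Cg \<beta> :: real
  assumes B1_pos: "1 \<le> B1" and B1_le: "B1 \<le> m"
    and D: "prob_space D"
    and G_meas: "\<And>i. i < m \<Longrightarrow> (\<lambda>(x, \<xi>). G i x \<xi>) \<in> borel_measurable (borel \<Otimes>\<^sub>M D)"
    and G_int: "\<And>i x. i < m \<Longrightarrow> integrable D (G i x)"
    and G_unbiased: "\<And>i x. i < m \<Longrightarrow> (\<integral>\<xi>. G i x \<xi> \<partial>D) = g i x"
    and G_var_int: "\<And>i x. i < m \<Longrightarrow> integrable D (\<lambda>\<xi>. (norm (G i x \<xi> - g i x))\<^sup>2)"
    and G_var: "\<And>i x. i < m \<Longrightarrow> (\<integral>\<xi>. (norm (G i x \<xi> - g i x))\<^sup>2 \<partial>D) \<le> \<sigma>\<^sup>2 / real B2"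
    and G_lip_int: "\<And>i x y. i < m \<Longrightarrow> integrable D (\<lambda>\<xi>. (norm (G i x \<xi> - G i y \<xi>))\<^sup>2)"
    and G_lip: "\<And>i x y. i < m \<Longrightarrow>
       (\<integral>\<xi>. (norm (G i x \<xi> - G i y \<xi>))\<^sup>2 \<partial>D) \<le> Cg\<^sup>2 * (norm (x - y))\<^sup>2"
    and g_lip: "\<And>i. i < m \<Longrightarrow> Cg-lipschitz_on UNIV (g i)"
    and \<beta>_pos: "0 < \<beta>" and \<beta>_le: "\<beta> \<le> 1 / 2"
begin

abbreviation \<gamma> :: real where
  "\<gamma> \<equiv> msvr_gamma m B1 \<beta>"

definition block_residual :: "nat \<Rightarrow> 'd \<Rightarrow> 'd \<Rightarrow> 'p \<Rightarrow> 'x \<Rightarrow> 'p" where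
  "block_residual i wp wc u \<xi> =
     (1 - \<beta>) *\<^sub>R u + \<beta> *\<^sub>R G i wc \<xi> + \<gamma> *\<^sub>R (G i wc \<xi> - G i wp \<xi>) - g i wc"

lemma msvr_update_minus_g:
  "msvr_update m B1 \<beta> G wp wc u S \<xi> i - g i wc
   = (if i \<in> S then block_residual i wp wc (u i) (\<xi> i) else u i - g i wc)"
  by (simp add: msvr_update_def block_residual_def)

lemma measurable_G:
  assumes "i < m" and "f \<in> borel_measurable K" and "h \<in> K \<rightarrow>\<^sub>M D"
  shows "(\<lambda>k. G i (f k) (h k)) \<in> borel_measurable K"
  using measurable_compose[OF measurable_Pair[OF assms(2,3)] G_meas[OF assms(1)]] by simp

lemma measurable_g:
  assumes "i < m" and "f \<in> borel_measurable K"
  shows "(\<lambda>k. g i (f k)) \<in> borel_measurable K"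
  using borel_measurable_continuous_on[OF lipschitz_on_continuous_on[OF g_lip[OF assms(1)]] assms(2)] .

lemma measurable_msvr_update_err:
  assumes "i < m"
    and wp: "wp \<in> borel_measurable K" and wc: "wc \<in> borel_measurable K"
    and u: "(\<lambda>k. u k i) \<in> borel_measurable K" and S: "S \<in> K \<rightarrow>\<^sub>M count_space UNIV"
    and \<xi>: "\<xi> \<in> K \<rightarrow>\<^sub>M Pi\<^sub>M {..<m} (\<lambda>_. D)"
  shows "(\<lambda>k. (norm (msvr_update m B1 \<beta> G (wp k) (wc k) (u k) (S k) (\<xi> k) i - g i (wc k)))\<^sup>2)
         \<in> borel_measurable K"
proof -
  have \<xi>_i: "(\<lambda>k. \<xi> k i) \<in> K \<rightarrow>\<^sub>M D"
    using measurable_compose[OF \<xi> measurable_component_singleton] \<open>i < m\<close> by simp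
  note [measurable] = u measurable_G[OF \<open>i < m\<close> wc \<xi>_i] measurable_G[OF \<open>i < m\<close> wp \<xi>_i]
    measurable_g[OF \<open>i < m\<close> wc]
  have [measurable]: "Measurable.pred K (\<lambda>k. i \<in> S k)"
    using measurable_compose[OF S measurable_count_space, of "\<lambda>s. i \<in> s"] by (simp add: pred_def)
  show ?thesis
    unfolding msvr_update_minus_g block_residual_def by measurable
qed

lemma measurable_track_err_msvr_update:
  assumes "wp \<in> borel_measurable K" and "wc \<in> borel_measurable K"
    and "\<And>i. i < m \<Longrightarrow> (\<lambda>k. u k i) \<in> borel_measurable K" and "S \<in> K \<rightarrow>\<^sub>M count_space UNIV"
    and "\<xi> \<in> K \<rightarrow>\<^sub>M Pi\<^sub>M {..<m} (\<lambda>_. D)"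
  shows "(\<lambda>k. track_err m (msvr_update m B1 \<beta> G (wp k) (wc k) (u k) (S k) (\<xi> k)) g (wc k))
         \<in> borel_measurable K"
  unfolding track_err_def using assms by (intro borel_measurable_sum measurable_msvr_update_err) auto

lemma g_dist_sq_le:
  assumes "i < m"
  shows "(norm (g i x - g i y))\<^sup>2 \<le> Cg\<^sup>2 * (norm (x - y))\<^sup>2"
proof -
  have "norm (g i x - g i y) \<le> Cg * norm (x - y)"
    using g_lip[OF assms] by (simp add: lipschitz_on_def dist_norm)
  then have "(norm (g i x - g i y))\<^sup>2 \<le> (Cg * norm (x - y))\<^sup>2"
    by (intro power_mono) auto
  then show ?thesis
    by (simp add: power_mult_distrib)
qed

lemma block_noise_moments:
  fixes wp wc :: 'd
  assumes "i < m"
  defines "W \<equiv> \<lambda>\<xi>. \<beta> *\<^sub>R (G i wc \<xi> - g i wc) + \<gamma> *\<^sub>R (G i wc \<xi> - G i wp \<xi>)"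
  shows "integrable D W"
    and "(\<integral>\<xi>. W \<xi> \<partial>D) = \<gamma> *\<^sub>R (g i wc - g i wp)"
    and "integrable D (\<lambda>\<xi>. (norm (W \<xi>))\<^sup>2)"
    and "(\<integral>\<xi>. (norm (W \<xi>))\<^sup>2 \<partial>D)
         \<le> 2 * \<beta>\<^sup>2 * (\<sigma>\<^sup>2 / real B2) + 2 * \<gamma>\<^sup>2 * (Cg\<^sup>2 * (norm (wc - wp))\<^sup>2)"
proof -
  interpret D: prob_space D by (rule D)
  let ?X = "\<lambda>\<xi>. G i wc \<xi> - g i wc" and ?Y = "\<lambda>\<xi>. G i wc \<xi> - G i wp \<xi>"
  let ?B = "\<lambda>\<xi>. 2 * \<beta>\<^sup>2 * (norm (?X \<xi>))\<^sup>2 + 2 * \<gamma>\<^sup>2 * (norm (?Y \<xi>))\<^sup>2"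
  have int_G: "integrable D (G i x)" for x
    using G_int[OF assms(1)] .
  show "integrable D W"
    unfolding W_def using int_G by auto
  show "(\<integral>\<xi>. W \<xi> \<partial>D) = \<gamma> *\<^sub>R (g i wc - g i wp)"
    unfolding W_def using int_G G_unbiased[OF assms(1)] by (simp add: D.prob_space)
  have W_le: "(norm (W \<xi>))\<^sup>2 \<le> ?B \<xi>" for \<xi>
    unfolding W_def using norm_add_sq_le[of "\<beta> *\<^sub>R ?X \<xi>" "\<gamma> *\<^sub>R ?Y \<xi>"]
    by (simp add: power_mult_distrib)
  have int_B: "integrable D ?B"
    using G_var_int[OF assms(1)] G_lip_int[OF assms(1)] by auto
  have "W \<in> borel_measurable D"
    using \<open>integrable D W\<close> by auto
  then show int_W2: "integrable D (\<lambda>\<xi>. (norm (W \<xi>))\<^sup>2)"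
    using W_le by (intro Bochner_Integration.integrable_bound[OF int_B]) auto
  have "(\<integral>\<xi>. (norm (W \<xi>))\<^sup>2 \<partial>D) \<le> (\<integral>\<xi>. ?B \<xi> \<partial>D)"
    using int_W2 int_B W_le by (rule integral_mono)
  also have "\<dots> = 2 * \<beta>\<^sup>2 * (\<integral>\<xi>. (norm (?X \<xi>))\<^sup>2 \<partial>D) + 2 * \<gamma>\<^sup>2 * (\<integral>\<xi>. (norm (?Y \<xi>))\<^sup>2 \<partial>D)"
    using G_var_int[OF assms(1)] G_lip_int[OF assms(1)] by simp
  also have "\<dots> \<le> 2 * \<beta>\<^sup>2 * (\<sigma>\<^sup>2 / real B2) + 2 * \<gamma>\<^sup>2 * (Cg\<^sup>2 * (norm (wc - wp))\<^sup>2)"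
    using G_var[OF assms(1)] G_lip[OF assms(1)] by (intro add_mono mult_left_mono) auto
  finally show "(\<integral>\<xi>. (norm (W \<xi>))\<^sup>2 \<partial>D)
         \<le> 2 * \<beta>\<^sup>2 * (\<sigma>\<^sup>2 / real B2) + 2 * \<gamma>\<^sup>2 * (Cg\<^sup>2 * (norm (wc - wp))\<^sup>2)" .
qed

lemma block_residual_moments:
  assumes "i < m"
  shows "integrable D (\<lambda>\<xi>. (norm (block_residual i wp wc u \<xi>))\<^sup>2)"
    and "(\<integral>\<xi>. (norm (block_residual i wp wc u \<xi>))\<^sup>2 \<partial>D)
         \<le> (1 - \<beta>)\<^sup>2 * (norm (u - g i wc))\<^sup>2
           + 2 * \<gamma> * (1 - \<beta>) * ((u - g i wc) \<bullet> (g i wc - g i wp))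
           + 2 * \<beta>\<^sup>2 * (\<sigma>\<^sup>2 / real B2) + 2 * \<gamma>\<^sup>2 * (Cg\<^sup>2 * (norm (wc - wp))\<^sup>2)"
proof -
  let ?W = "\<lambda>\<xi>. \<beta> *\<^sub>R (G i wc \<xi> - g i wc) + \<gamma> *\<^sub>R (G i wc \<xi> - G i wp \<xi>)"
  have split: "block_residual i wp wc u \<xi> = (1 - \<beta>) *\<^sub>R (u - g i wc) + ?W \<xi>" for \<xi>
    by (simp add: block_residual_def algebra_simps)
  note W = block_noise_moments[OF assms, of wc wp]
  show "integrable D (\<lambda>\<xi>. (norm (block_residual i wp wc u \<xi>))\<^sup>2)"
    unfolding split using prob_space.expectation_norm_add_sq(1)[OF D W(1,3)] .
  show "(\<integral>\<xi>. (norm (block_residual i wp wc u \<xi>))\<^sup>2 \<partial>D)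
         \<le> (1 - \<beta>)\<^sup>2 * (norm (u - g i wc))\<^sup>2
           + 2 * \<gamma> * (1 - \<beta>) * ((u - g i wc) \<bullet> (g i wc - g i wp))
           + 2 * \<beta>\<^sup>2 * (\<sigma>\<^sup>2 / real B2) + 2 * \<gamma>\<^sup>2 * (Cg\<^sup>2 * (norm (wc - wp))\<^sup>2)"
    unfolding split prob_space.expectation_norm_add_sq(2)[OF D W(1,3)] W(2)
    using W(4) by (simp add: power_mult_distrib)
qed

lemma expected_block_error_le:
  assumes "i < m"
  shows "real B1 / real m * (\<integral>\<xi>. (norm (block_residual i wp wc u \<xi>))\<^sup>2 \<partial>D)
           + (1 - real B1 / real m) * (norm (u - g i wc))\<^sup>2
         \<le> (1 - real B1 * \<beta> / real m) * (norm (u - g i wp))\<^sup>2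
           + 2 * real B1 / real m * \<beta>\<^sup>2 * \<sigma>\<^sup>2 / real B2
           + 8 * (real m / real B1) * Cg\<^sup>2 * (norm (wc - wp))\<^sup>2"
proof -
  let ?p = "real B1 / real m"
  let ?b = "u - g i wc" and ?\<Delta> = "g i wc - g i wp"
  let ?L = "Cg\<^sup>2 * (norm (wc - wp))\<^sup>2"
  have p: "0 \<le> ?p" "?p \<le> 1" "0 < B1" "0 < m"
    using B1_pos B1_le by auto
  have u_wp: "(norm (u - g i wp))\<^sup>2 = (norm ?b)\<^sup>2 + 2 * (?b \<bullet> ?\<Delta>) + (norm ?\<Delta>)\<^sup>2"
    by (simp add: power2_norm_eq_inner inner_add_left inner_add_right inner_commute algebra_simps)
  have "?p * (\<integral>\<xi>. (norm (block_residual i wp wc u \<xi>))\<^sup>2 \<partial>D) + (1 - ?p) * (norm ?b)\<^sup>2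
        \<le> ?p * ((1 - \<beta>)\<^sup>2 * (norm ?b)\<^sup>2 + 2 * \<gamma> * (1 - \<beta>) * (?b \<bullet> ?\<Delta>) + 2 * \<gamma>\<^sup>2 * ?L)
          + (1 - ?p) * (norm ?b)\<^sup>2 + ?p * (2 * \<beta>\<^sup>2 * (\<sigma>\<^sup>2 / real B2))"
    using mult_left_mono[OF block_residual_moments(2)[OF assms, of wp wc u] p(1)]
    by (simp add: algebra_simps)
  also have "\<dots> \<le> (1 - ?p * \<beta>) * (norm (u - g i wp))\<^sup>2 + 8 * (real m / real B1) * ?L
          + ?p * (2 * \<beta>\<^sup>2 * (\<sigma>\<^sup>2 / real B2))"
    unfolding u_wp
  proof (intro add_right_mono msvr_error_recursion_scalar[OF p(1,2)])
    show "?p * (1 - \<beta>) * \<gamma> = ?p * (1 - \<beta>)\<^sup>2 + (1 - ?p)"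
      using \<beta>_le p by (intro msvr_gamma_balance) auto
    show "2 * ?p * \<gamma>\<^sup>2 \<le> 8 * (real m / real B1)"
      using \<beta>_pos \<beta>_le B1_pos B1_le by (rule msvr_gamma_sq_le)
    show "(norm ?\<Delta>)\<^sup>2 \<le> ?L"
      using g_dist_sq_le[OF assms] .
    show "0 \<le> (norm ?b)\<^sup>2 + 2 * (?b \<bullet> ?\<Delta>) + (norm ?\<Delta>)\<^sup>2"
      unfolding u_wp[symmetric] by simp
  qed (use \<beta>_pos \<beta>_le in auto)
  finally show ?thesis
    by (simp add: algebra_simps)
qed

lemma nn_integral_msvr_update_err_samples:
  assumes "i < m"
  shows "(\<integral>\<^sup>+\<xi>. ennreal ((norm (msvr_update m B1 \<beta> G wp wc u S \<xi> i - g i wc))\<^sup>2) \<partial>Pi\<^sub>M {..<m} (\<lambda>_. D))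
         = ennreal (if i \<in> S then \<integral>x. (norm (block_residual i wp wc (u i) x))\<^sup>2 \<partial>D
                    else (norm (u i - g i wc))\<^sup>2)"
proof (cases "i \<in> S")
  case True
  have "(\<lambda>x. (norm (block_residual i wp wc (u i) x))\<^sup>2) \<in> borel_measurable D"
    using block_residual_moments(1)[OF assms] by auto
  then have "(\<integral>\<^sup>+\<xi>. ennreal ((norm (block_residual i wp wc (u i) (\<xi> i)))\<^sup>2) \<partial>Pi\<^sub>M {..<m} (\<lambda>_. D))
        = (\<integral>\<^sup>+x. ennreal ((norm (block_residual i wp wc (u i) x))\<^sup>2) \<partial>D)"
    using D assms by (intro nn_integral_PiM_component) auto
  also have "\<dots> = ennreal (\<integral>x. (norm (block_residual i wp wc (u i) x))\<^sup>2 \<partial>D)"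
    using block_residual_moments(1)[OF assms] by (intro nn_integral_eq_integral) auto
  finally show ?thesis
    using True by (simp add: msvr_update_minus_g)
next
  case False
  interpret Q: prob_space "Pi\<^sub>M {..<m} (\<lambda>_. D)"
    using D by (intro prob_space_PiM)
  show ?thesis
    using False by (simp add: msvr_update_minus_g Q.emeasure_space_1)
qed

lemma nn_integral_msvr_update_err:
  assumes "i < m"
  shows "(\<integral>\<^sup>+y. ennreal ((norm (msvr_update m B1 \<beta> G wp wc u (fst y) (snd y) i - g i wc))\<^sup>2)
            \<partial>(measure_pmf (uniform_subsets m B1) \<Otimes>\<^sub>M Pi\<^sub>M {..<m} (\<lambda>_. D)))
         = ennreal (real B1 / real m * (\<integral>x. (norm (block_residual i wp wc (u i) x))\<^sup>2 \<partial>D)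
                    + (1 - real B1 / real m) * (norm (u i - g i wc))\<^sup>2)"
proof -
  let ?P = "measure_pmf (uniform_subsets m B1)" and ?Q = "Pi\<^sub>M {..<m} (\<lambda>_. D)"
  interpret Q: prob_space ?Q
    using D by (intro prob_space_PiM)
  have "(\<lambda>y. ennreal ((norm (msvr_update m B1 \<beta> G wp wc u (fst y) (snd y) i - g i wc))\<^sup>2))
        \<in> borel_measurable (?P \<Otimes>\<^sub>M ?Q)"
    using assms by (intro measurable_compose[OF _ measurable_ennreal] measurable_msvr_update_err) auto
  from Q.nn_integral_fst[OF this]
  have "(\<integral>\<^sup>+y. ennreal ((norm (msvr_update m B1 \<beta> G wp wc u (fst y) (snd y) i - g i wc))\<^sup>2) \<partial>(?P \<Otimes>\<^sub>M ?Q))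
        = (\<integral>\<^sup>+S. (\<integral>\<^sup>+\<xi>. ennreal ((norm (msvr_update m B1 \<beta> G wp wc u S \<xi> i - g i wc))\<^sup>2) \<partial>?Q) \<partial>?P)"
    by simp
  also have "\<dots> = (\<integral>\<^sup>+S. ennreal (if i \<in> S then \<integral>x. (norm (block_residual i wp wc (u i) x))\<^sup>2 \<partial>D
                    else (norm (u i - g i wc))\<^sup>2) \<partial>?P)"
    by (simp add: nn_integral_msvr_update_err_samples[OF assms])
  also have "\<dots> = ennreal (real B1 / real m * (\<integral>x. (norm (block_residual i wp wc (u i) x))\<^sup>2 \<partial>D)
                    + (1 - real B1 / real m) * (norm (u i - g i wc))\<^sup>2)"
    using nn_integral_measure_pmf_if[where A = "{S. i \<in> S}"] prob_uniform_subsets_mem[OF assms] B1_pos B1_le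
    by simp
  finally show ?thesis .
qed

lemma nn_integral_track_err_msvr_update_le:
  "(\<integral>\<^sup>+y. ennreal (track_err m (msvr_update m B1 \<beta> G wp wc u (fst y) (snd y)) g wc)
      \<partial>(measure_pmf (uniform_subsets m B1) \<Otimes>\<^sub>M Pi\<^sub>M {..<m} (\<lambda>_. D)))
   \<le> ennreal ((1 - real B1 * \<beta> / real m) * track_err m u g wp
              + 2 * real B1 * \<beta>\<^sup>2 * \<sigma>\<^sup>2 / real B2
              + 8 * (real m)\<^sup>2 * Cg\<^sup>2 / real B1 * (norm (wc - wp))\<^sup>2)"
proof -
  let ?N = "measure_pmf (uniform_subsets m B1) \<Otimes>\<^sub>M Pi\<^sub>M {..<m} (\<lambda>_. D)"
  let ?err = "\<lambda>i y. (norm (msvr_update m B1 \<beta> G wp wc u (fst y) (snd y) i - g i wc))\<^sup>2"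
  let ?avg = "\<lambda>i. real B1 / real m * (\<integral>x. (norm (block_residual i wp wc (u i) x))\<^sup>2 \<partial>D)
                  + (1 - real B1 / real m) * (norm (u i - g i wc))\<^sup>2"
  have "real B1 / real m \<le> 1"
    using B1_pos B1_le by simp
  then have avg_nonneg: "0 \<le> ?avg i" for i
    by (intro add_nonneg_nonneg mult_nonneg_nonneg) auto
  have "(\<integral>\<^sup>+y. ennreal (track_err m (msvr_update m B1 \<beta> G wp wc u (fst y) (snd y)) g wc) \<partial>?N)
        = (\<integral>\<^sup>+y. (\<Sum>i<m. ennreal (?err i y)) \<partial>?N)"
    by (simp add: track_err_def sum_ennreal)
  also have "\<dots> = (\<Sum>i<m. \<integral>\<^sup>+y. ennreal (?err i y) \<partial>?N)"
    by (intro nn_integral_sum measurable_compose[OF _ measurable_ennreal] measurable_msvr_update_err) auto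
  also have "\<dots> = ennreal (\<Sum>i<m. ?avg i)"
    using avg_nonneg by (simp add: nn_integral_msvr_update_err sum_ennreal)
  also have "\<dots> \<le> ennreal (\<Sum>i<m. (1 - real B1 * \<beta> / real m) * (norm (u i - g i wp))\<^sup>2
           + 2 * real B1 / real m * \<beta>\<^sup>2 * \<sigma>\<^sup>2 / real B2
           + 8 * (real m / real B1) * Cg\<^sup>2 * (norm (wc - wp))\<^sup>2)"
    by (intro ennreal_leI sum_mono expected_block_error_le) auto
  also have "\<dots> = ennreal ((1 - real B1 * \<beta> / real m) * track_err m u g wp
              + 2 * real B1 * \<beta>\<^sup>2 * \<sigma>\<^sup>2 / real B2
              + 8 * (real m)\<^sup>2 * Cg\<^sup>2 / real B1 * (norm (wc - wp))\<^sup>2)"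
    using B1_pos B1_le
    by (simp add: track_err_def sum.distrib sum_distrib_left power2_eq_square) (simp add: field_simps)
  finally show ?thesis .
qed

end

theorem lemma1:
  fixes M :: "'a measure" and D :: "'x measure"
    and G :: "nat \<Rightarrow> 'd::euclidean_space \<Rightarrow> 'x \<Rightarrow> 'p::euclidean_space"
    and g :: "nat \<Rightarrow> 'd \<Rightarrow> 'p"
    and w_prev w_cur :: "'a \<Rightarrow> 'd" and u_prev :: "'a \<Rightarrow> nat \<Rightarrow> 'p"
    and m B1 B2 :: nat and \<sigma> Cg \<beta> :: real
  assumes "m \<ge> 1" and "1 \<le> B1" and "B1 \<le> m" and "B2 \<ge> 1"
    and "prob_space M" and "prob_space D"
    and G_meas: "\<And>i. i < m \<Longrightarrow> (\<lambda>(x, \<xi>). G i x \<xi>) \<in> borel_measurable (borel \<Otimes>\<^sub>M D)"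
    and G_int: "\<And>i x. i < m \<Longrightarrow> integrable D (G i x)"
    and G_unbiased: "\<And>i x. i < m \<Longrightarrow> (\<integral>\<xi>. G i x \<xi> \<partial>D) = g i x"
    and G_var_int: "\<And>i x. i < m \<Longrightarrow> integrable D (\<lambda>\<xi>. (norm (G i x \<xi> - g i x))\<^sup>2)"
    and G_var: "\<And>i x. i < m \<Longrightarrow> (\<integral>\<xi>. (norm (G i x \<xi> - g i x))\<^sup>2 \<partial>D) \<le> \<sigma>\<^sup>2 / real B2"
    and G_lip_int: "\<And>i x y. i < m \<Longrightarrow> integrable D (\<lambda>\<xi>. (norm (G i x \<xi> - G i y \<xi>))\<^sup>2)"
    and G_lip: "\<And>i x y. i < m \<Longrightarrow>
       (\<integral>\<xi>. (norm (G i x \<xi> - G i y \<xi>))\<^sup>2 \<partial>D) \<le> Cg\<^sup>2 * (norm (x - y))\<^sup>2"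
    and g_lip: "\<And>i. i < m \<Longrightarrow> Cg-lipschitz_on UNIV (g i)"
    and w_prev_meas: "w_prev \<in> borel_measurable M"
    and w_cur_meas: "w_cur \<in> borel_measurable M"
    and u_prev_meas: "\<And>i. i < m \<Longrightarrow> (\<lambda>a. u_prev a i) \<in> borel_measurable M"
    and err_int: "integrable M (\<lambda>a. track_err m (u_prev a) g (w_prev a))"
    and dw_int: "integrable M (\<lambda>a. (norm (w_cur a - w_prev a))\<^sup>2)"
    and "0 < \<beta>" and "\<beta> \<le> 1 / 2"
  shows "(\<integral>\<omega>. track_err m
              (msvr_update m B1 \<beta> G (w_prev (fst \<omega>)) (w_cur (fst \<omega>)) (u_prev (fst \<omega>))
                 (fst (snd \<omega>)) (snd (snd \<omega>)))
              g (w_cur (fst \<omega>))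
          \<partial>(M \<Otimes>\<^sub>M (measure_pmf (uniform_subsets m B1) \<Otimes>\<^sub>M PiM {..<m} (\<lambda>_. D))))
     \<le> (1 - real B1 * \<beta> / real m) * (\<integral>a. track_err m (u_prev a) g (w_prev a) \<partial>M)
       + 2 * real B1 * \<beta>\<^sup>2 * \<sigma>\<^sup>2 / real B2
       + 8 * (real m)\<^sup>2 * Cg\<^sup>2 / real B1 * (\<integral>a. (norm (w_cur a - w_prev a))\<^sup>2 \<partial>M)"
proof -
  interpret msvr_setting D G g m B1 B2 \<sigma> Cg \<beta>
    by (rule msvr_setting.intro) (fact assms)+
  interpret M: prob_space M by fact
  let ?N = "measure_pmf (uniform_subsets m B1) \<Otimes>\<^sub>M PiM {..<m} (\<lambda>_. D)"
  let ?bound = "\<lambda>a. (1 - real B1 * \<beta> / real m) * track_err m (u_prev a) g (w_prev a)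
              + 2 * real B1 * \<beta>\<^sup>2 * \<sigma>\<^sup>2 / real B2
              + 8 * (real m)\<^sup>2 * Cg\<^sup>2 / real B1 * (norm (w_cur a - w_prev a))\<^sup>2"
  have "0 \<le> 1 - real B1 * \<beta> / real m"
    using assms mult_mono[of "real B1" "real m" \<beta> 1] by (simp add: field_simps)
  moreover have "(\<integral>\<^sup>+y. ennreal (track_err m (msvr_update m B1 \<beta> G (w_prev a) (w_cur a) (u_prev a)
                  (fst y) (snd y)) g (w_cur a)) \<partial>?N) \<le> ennreal (?bound a)" for a
    by (rule nn_integral_track_err_msvr_update_le)
  ultimately have "(\<integral>\<omega>. track_err m
              (msvr_update m B1 \<beta> G (w_prev (fst \<omega>)) (w_cur (fst \<omega>)) (u_prev (fst \<omega>))
                 (fst (snd \<omega>)) (snd (snd \<omega>))) g (w_cur (fst \<omega>)) \<partial>(M \<Otimes>\<^sub>M ?N))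
        \<le> (\<integral>a. ?bound a \<partial>M)"
    using err_int dw_int
    by (intro integral_pair_measure_le measurable_track_err_msvr_update
        prob_space_imp_sigma_finite prob_space_pair prob_space_PiM prob_space_measure_pmf
        measurable_compose[OF measurable_fst] w_prev_meas w_cur_meas u_prev_meas
        add_nonneg_nonneg mult_nonneg_nonneg track_err_nonneg D)
      (auto intro: measurable_compose[OF measurable_snd])
  also have "(\<integral>a. ?bound a \<partial>M)
     = (1 - real B1 * \<beta> / real m) * (\<integral>a. track_err m (u_prev a) g (w_prev a) \<partial>M)
       + 2 * real B1 * \<beta>\<^sup>2 * \<sigma>\<^sup>2 / real B2
       + 8 * (real m)\<^sup>2 * Cg\<^sup>2 / real B1 * (\<integral>a. (norm (w_cur a - w_prev a))\<^sup>2 \<partial>M)"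
    using err_int dw_int by (simp add: M.prob_space)
  finally show ?thesis .
qed

end
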